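(* In the setting below, with $Q=L/\mu$, suppose $0<\eta\le\frac1L$. Then for every $k\ge 0$, \[ \|x_k-x^*\|\le \frac{2}{\mu}\|d_k\|+2\eta Q\sum_{j=(k-K)_+}^{k-1}\|d_j\|. \]
   Context: Let $m,n\ge 1$ be integers and $\|\cdot\|$ the Euclidean norm on $\mathbb{R}^n$. For $i=1,\dots,m$, let $f_i:\mathbb{R}^n\to\mathbb{R}$ be continuously differentiable with $\|\nabla f_i(x)-\nabla f_i(y)\|\le L_i\|x-y\|$ for all $x,y$, where $L_i\ge 0$ (the $f_i$ are not assumed convex). Let $f=\frac1m\sum_{i=1}^m f_i$ and $L=\frac1m\sum_{i=1}^m L_i$. Assume $f$ is $\mu$-strongly convex for some $\mu>0$ (i.e. $x\mapsto f(x)-\frac{\mu}{2}\|x\|^2$ is convex). Let $r:\mathbb{R}^n\to(-\infty,\infty]$ be proper, closed and convex, let $F=f+r$, and let $x^*$ be the unique minimizer of $F$. For $\eta>0$ define $\mathrm{prox}_r^\eta(y)=\arg\min_{x\in\mathbb{R}^n}\{\frac12\|x-y\|^2+\eta r(x)\}$. PIAG method: fix an integer $K\ge 0$, a step size $\eta>0$ and $x_0\in\mathbb{R}^n$; for each $k\ge0$ and each $i$ let $\tau_{i,k}$ be any (deterministically chosen) integer with $\max(k-K,0)\le\tau_{i,k}\le k$; set $g_k=\frac1m\sum_{i=1}^m\nabla f_i(x_{\tau_{i,k}})$ and $x_{k+1}=\mathrm{prox}_r^\eta(x_k-\eta g_k)$. Define $d_k=(x_{k+1}-x_k)/\eta$.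 Write $(t)_+=\max(t,0)$; empty sums are zero. *)

theory Defs
  imports "HOL-Analysis.Analysis" "HOL-Library.Extended_Real"
begin

definition proper_closed_convex :: "('a::euclidean_space \<Rightarrow> ereal) \<Rightarrow> bool" where
  "proper_closed_convex r \<longleftrightarrow>
     (\<forall>x. r x \<noteq> -\<infinity>) \<and> (\<exists>x. r x \<noteq> \<infinity>) \<and>
     convex {(x, t::real). r x \<le> ereal t} \<and> closed {(x, t::real). r x \<le> ereal t}"

definition is_prox :: "('a::euclidean_space \<Rightarrow> ereal) \<Rightarrow> real \<Rightarrow> 'a \<Rightarrow> 'a \<Rightarrow> bool" where
  "is_prox r \<eta> y z \<longleftrightarrow>
     (\<forall>x. ereal (1/2 * (norm (z - y))\<^sup>2) + ereal \<eta> * r z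
          \<le> ereal (1/2 * (norm (x - y))\<^sup>2) + ereal \<eta> * r x)"

end

theory Submission
  imports Defs
begin

text \<open>Write \<open>e = x\<^sub>k - x\<^sup>*\<close>, \<open>d = d\<^sub>k\<close> and \<open>\<nabla>f\<close> for the average gradient. The optimality conditions
  of the prox step and of \<open>x\<^sup>*\<close> add up to \<open>0 \<le> (\<nabla>f(x\<^sup>*) - g\<^sub>k - d)\<bullet>(e + \<eta> d)\<close>, and strong
  convexity gives \<open>\<mu>\<parallel>e\<parallel>\<^sup>2 \<le> (\<nabla>f(x\<^sub>k) - \<nabla>f(x\<^sup>*))\<bullet>e\<close>. Adding both and using Cauchy-Schwarz
  and \<open>\<eta>L \<le> 1\<close> gives a quadratic inequality in \<open>\<parallel>e\<parallel>\<close> whose positive root is at most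
  \<open>2(\<parallel>d\<parallel> + \<parallel>\<nabla>f(x\<^sub>k) - g\<^sub>k\<parallel>)/\<mu>\<close>. The gradient error due to the delays is at most \<open>L\<close> times
  the length of the path \<open>x\<^sub>k\<^sub>-\<^sub>K, \<dots>, x\<^sub>k\<close>.\<close>

lemma DERIV_nonneg_at_right_min:
  fixes \<phi> :: "real \<Rightarrow> real"
  assumes deriv: "(\<phi> has_real_derivative D) (at 0)"
    and min: "\<And>t. 0 < t \<Longrightarrow> t \<le> 1 \<Longrightarrow> \<phi> 0 \<le> \<phi> t"
  shows "0 \<le> D"
proof (rule ccontr)
  assume "\<not> 0 \<le> D"
  then obtain e where "e > 0" and dec: "\<And>h. 0 < h \<Longrightarrow> h < e \<Longrightarrow> \<phi> h < \<phi> 0"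
    using DERIV_neg_dec_right[OF deriv] by force
  define t where "t = min (e/2) 1"
  have "0 < t" "t < e" "t \<le> 1" using \<open>e > 0\<close> by (auto simp: t_def)
  then show False using dec[of t] min[of t] by force
qed

lemma has_real_derivative_along_line:
  fixes F :: "'a::real_inner \<Rightarrow> real"
  assumes "(F has_derivative (\<lambda>h. g \<bullet> h)) (at a)"
  shows "((\<lambda>t. F (a + t *\<^sub>R v)) has_real_derivative (g \<bullet> v)) (at 0)"
proof -
  have line: "((\<lambda>t::real. a + t *\<^sub>R v) has_derivative (\<lambda>t. t *\<^sub>R v)) (at 0)"
    by (auto intro!: derivative_eq_intros)
  have "(F has_derivative (\<lambda>h. g \<bullet> h)) (at ((\<lambda>t::real. a + t *\<^sub>R v) 0))"
    using assms by simp
  from has_derivative_compose[OF line this]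
  have "((\<lambda>t. F (a + t *\<^sub>R v)) has_derivative (\<lambda>t. g \<bullet> (t *\<^sub>R v))) (at 0)" .
  moreover have "(\<lambda>t. g \<bullet> (t *\<^sub>R v)) = (*) (g \<bullet> v)" by (auto simp: fun_eq_iff)
  ultimately show ?thesis by (simp add: has_field_derivative_def)
qed

lemma has_derivative_norm_diff_power2:
  fixes y :: "'a::real_inner"
  shows "((\<lambda>u. (norm (u - y))\<^sup>2) has_derivative (\<lambda>h. (2 *\<^sub>R (u - y)) \<bullet> h)) (at u)"
  unfolding power2_norm_eq_inner
  by (auto intro!: derivative_eq_intros simp: fun_eq_iff inner_commute algebra_simps)

lemma convex_on_gradient_inequality:
  fixes h :: "'a::real_inner \<Rightarrow> real"
  assumes convex: "convex_on UNIV h" and deriv: "(h has_derivative (\<lambda>u. g \<bullet> u)) (at a)"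
  shows "h a + g \<bullet> (b - a) \<le> h b"
proof -
  define \<phi> where "\<phi> t = h a + t * (h b - h a) - h (a + t *\<^sub>R (b - a))" for t
  have "(\<phi> has_real_derivative (h b - h a - g \<bullet> (b - a))) (at 0)"
    unfolding \<phi>_def using has_real_derivative_along_line[OF deriv, of "b - a"]
    by (auto intro!: derivative_eq_intros)
  moreover have "\<phi> 0 \<le> \<phi> t" if "0 < t" "t \<le> 1" for t
  proof -
    have "h ((1 - t) *\<^sub>R a + t *\<^sub>R b) \<le> (1 - t) * h a + t * h b"
      using convex that by (intro convex_onD) auto
    moreover have "(1 - t) *\<^sub>R a + t *\<^sub>R b = a + t *\<^sub>R (b - a)" by (simp add: algebra_simps)
    ultimately show ?thesis unfolding \<phi>_def by (simp add: algebra_simps)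
  qed
  ultimately have "0 \<le> h b - h a - g \<bullet> (b - a)" by (rule DERIV_nonneg_at_right_min)
  then show ?thesis by simp
qed

lemma strongly_convex_imp_strongly_monotone_gradient:
  fixes F :: "'a::real_inner \<Rightarrow> real"
  assumes convex: "convex_on UNIV (\<lambda>y. F y - \<mu> / 2 * (norm y)\<^sup>2)"
    and deriv: "\<And>y. (F has_derivative (\<lambda>h. G y \<bullet> h)) (at y)"
  shows "\<mu> * (norm (a - b))\<^sup>2 \<le> (G a - G b) \<bullet> (a - b)"
proof -
  have deriv_h: "((\<lambda>y. F y - \<mu> / 2 * (norm y)\<^sup>2) has_derivative (\<lambda>u. (G y - \<mu> *\<^sub>R y) \<bullet> u)) (at y)"
    for y
    using has_derivative_diff[OF deriv
        has_derivative_mult_right[OF has_derivative_norm_diff_power2[of 0 y], of "\<mu> / 2"]]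
    by (simp add: inner_diff_left)
  have "(F a - \<mu> / 2 * (norm a)\<^sup>2) + (G a - \<mu> *\<^sub>R a) \<bullet> (b - a) \<le> F b - \<mu> / 2 * (norm b)\<^sup>2"
    and "(F b - \<mu> / 2 * (norm b)\<^sup>2) + (G b - \<mu> *\<^sub>R b) \<bullet> (a - b) \<le> F a - \<mu> / 2 * (norm a)\<^sup>2"
    by (rule convex_on_gradient_inequality[OF convex deriv_h])+
  moreover have "(G a - \<mu> *\<^sub>R a) \<bullet> (b - a) + (G b - \<mu> *\<^sub>R b) \<bullet> (a - b)
      = \<mu> * ((a - b) \<bullet> (a - b)) - (G a - G b) \<bullet> (a - b)"
    by (simp add: inner_diff_left inner_diff_right inner_commute algebra_simps)
  ultimately show ?thesis by (simp add: power2_norm_eq_inner)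
qed

lemma strongly_monotone_Lipschitz_imp_le:
  fixes G :: "'a::euclidean_space \<Rightarrow> 'a"
  assumes mono: "\<And>a b. \<mu> * (norm (a - b))\<^sup>2 \<le> (G a - G b) \<bullet> (a - b)"
    and lip: "\<And>a b. norm (G a - G b) \<le> L * norm (a - b)"
  shows "\<mu> \<le> L"
proof -
  obtain e :: 'a where "e \<in> Basis" using nonempty_Basis by blast
  then have "norm e = 1" by simp
  have "\<mu> * (norm (e - 0))\<^sup>2 \<le> (G e - G 0) \<bullet> (e - 0)" by (rule mono)
  also have "\<dots> \<le> norm (G e - G 0) * norm (e - 0)" by (rule norm_cauchy_schwarz)
  also have "\<dots> \<le> L * norm (e - 0) * norm (e - 0)" using lip[of e 0] by (simp add: \<open>norm e = 1\<close>)
  finally show ?thesis using \<open>norm e = 1\<close> by simp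
qed

lemma proper_closed_convex_finite_if_le:
  assumes "proper_closed_convex r" and "r q \<le> ereal c"
  obtains v where "r q = ereal v" "v \<le> c"
proof -
  have "r q \<noteq> -\<infinity>" using assms(1) unfolding proper_closed_convex_def by blast
  with assms(2) that show ?thesis by (cases "r q") auto
qed

lemma proper_closed_convex_segment_le:
  assumes "proper_closed_convex r" and a: "r a = ereal ra" and b: "r b = ereal rb"
    and "0 \<le> t" "t \<le> 1"
  shows "r (a + t *\<^sub>R (b - a)) \<le> ereal ((1 - t) * ra + t * rb)"
proof -
  let ?epi = "{(x, s::real). r x \<le> ereal s}"
  have "convex ?epi" using assms(1) unfolding proper_closed_convex_def by blast
  moreover have "(a, ra) \<in> ?epi" "(b, rb) \<in> ?epi" using a b by auto
  ultimately have "((1 - t) *\<^sub>R a + t *\<^sub>R b, (1 - t) * ra + t * rb) \<in> ?epi"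
    using convexD[of ?epi "(a, ra)" "(b, rb)" "1 - t" t] \<open>0 \<le> t\<close> \<open>t \<le> 1\<close> by simp
  moreover have "(1 - t) *\<^sub>R a + t *\<^sub>R b = a + t *\<^sub>R (b - a)" by (simp add: algebra_simps)
  ultimately show ?thesis by simp
qed

lemma proper_closed_convex_finite_at_minimizer:
  assumes "proper_closed_convex r" and "0 < c" and "r p \<noteq> \<infinity>"
    and "ereal a + ereal c * r z \<le> ereal b + ereal c * r p"
  obtains v where "r z = ereal v"
proof -
  have "r p \<noteq> -\<infinity>" "r z \<noteq> -\<infinity>" using assms(1) unfolding proper_closed_convex_def by blast+
  with assms(2-4) have "r z \<noteq> \<infinity>" by auto
  with \<open>r z \<noteq> -\<infinity>\<close> that show ?thesis by (cases "r z") auto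
qed

lemma composite_minimizer_variational_inequality:
  assumes pcc: "proper_closed_convex r" and "0 \<le> c"
    and deriv: "(F has_derivative (\<lambda>h. g \<bullet> h)) (at a)"
    and min: "\<And>y. ereal (F a) + ereal c * r a \<le> ereal (F y) + ereal c * r y"
    and ra: "r a = ereal ra" and rw: "r w = ereal rw"
  shows "0 \<le> g \<bullet> (w - a) + c * (rw - ra)"
proof -
  define \<phi> where "\<phi> t = F (a + t *\<^sub>R (w - a)) + c * (t * (rw - ra))" for t
  have "(\<phi> has_real_derivative (g \<bullet> (w - a) + c * (rw - ra))) (at 0)"
    unfolding \<phi>_def using has_real_derivative_along_line[OF deriv]
    by (auto intro!: derivative_eq_intros)
  moreover have "\<phi> 0 \<le> \<phi> t" if "0 < t" "t \<le> 1" for t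
  proof -
    define q where "q = a + t *\<^sub>R (w - a)"
    have "r q \<le> ereal ((1 - t) * ra + t * rw)"
      unfolding q_def using proper_closed_convex_segment_le[OF pcc ra rw] that by simp
    then obtain rq where rq: "r q = ereal rq" "rq \<le> (1 - t) * ra + t * rw"
      using proper_closed_convex_finite_if_le[OF pcc] by blast
    have "F a + c * ra \<le> F q + c * rq" using min[of q] ra rq by simp
    moreover have "c * rq \<le> c * ((1 - t) * ra + t * rw)" using rq(2) \<open>0 \<le> c\<close> by (rule mult_left_mono)
    ultimately show ?thesis unfolding \<phi>_def q_def by (simp add: algebra_simps)
  qed
  ultimately show ?thesis by (rule DERIV_nonneg_at_right_min)
qed

lemma is_prox_variational_inequality:
  assumes "proper_closed_convex r" and "is_prox r \<eta> y z" and "0 \<le> \<eta>"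
    and "r z = ereal rz" and "r w = ereal rw"
  shows "(y - z) \<bullet> (w - z) \<le> \<eta> * (rw - rz)"
proof -
  have "((\<lambda>u. 1/2 * (norm (u - y))\<^sup>2) has_derivative (\<lambda>h. (z - y) \<bullet> h)) (at z)"
    using has_derivative_mult_right[OF has_derivative_norm_diff_power2[of y z], of "1/2"]
    by (simp add: inner_scaleR_left)
  from composite_minimizer_variational_inequality[OF assms(1,3) this _ assms(4,5)] assms(2)
  have "0 \<le> (z - y) \<bullet> (w - z) + \<eta> * (rw - rz)" unfolding is_prox_def by blast
  then show ?thesis by (simp add: inner_diff_left algebra_simps)
qed

lemma quadratic_inequality_imp_le:
  fixes \<mu> \<eta> E n D :: real
  assumes mu: "\<mu> > 0" and eta: "\<eta> > 0" and mu_eta: "\<mu> * \<eta> \<le> 1"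
    and "n \<ge> 0" "D \<ge> 0"
    and quad: "\<mu> * E\<^sup>2 \<le> (D + 2 * n) * E + \<eta> * D * n - \<eta> * n\<^sup>2"
  shows "E \<le> 2 * (n + D) / \<mu>"
proof -
  define u where "u = \<mu> * E"
  have "\<mu> * \<eta> * (n * (D - n)) \<le> D\<^sup>2 / 4"
  proof (cases "n * (D - n) \<ge> 0")
    case True
    have "n * (D - n) \<le> D\<^sup>2 / 4"
      using sum_squares_ge_zero[of "D - 2 * n" 0] by (simp add: power2_eq_square algebra_simps)
    with mult_right_mono[OF mu_eta True] show ?thesis by simp
  next
    case False
    have "0 \<le> \<mu> * \<eta>" using mu eta by simp
    then have "\<mu> * \<eta> * (n * (D - n)) \<le> 0"
      by (rule mult_nonneg_nonpos) (use False in simp)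
    moreover have "0 \<le> D\<^sup>2 / 4" by simp
    ultimately show ?thesis by linarith
  qed
  moreover have "u\<^sup>2 \<le> (D + 2 * n) * u + \<mu> * \<eta> * (n * (D - n))"
    using mult_left_mono[OF quad, of \<mu>] mu
    by (simp add: u_def power2_eq_square algebra_simps)
  ultimately have u_quad: "u\<^sup>2 \<le> (D + 2 * n) * u + D\<^sup>2 / 4" by simp
  have "u \<le> 2 * (n + D)"
  proof (rule ccontr)
    assume "\<not> ?thesis"
    \<comment> \<open>\<open>u\<^sup>2 - (D + 2n)u - D\<^sup>2/4 = (u - 2n - 2D)(u + D) + 2nD + 7D\<^sup>2/4\<close>\<close>
    then have "0 < (u - 2 * n - 2 * D) * (u + D)"
      using \<open>D \<ge> 0\<close> \<open>n \<ge> 0\<close> by (intro mult_pos_pos) auto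
    moreover have "0 \<le> n * D" using \<open>D \<ge> 0\<close> \<open>n \<ge> 0\<close> by simp
    ultimately show False using u_quad zero_le_square[of D]
      by (simp add: power2_eq_square algebra_simps)
  qed
  then show ?thesis using mu by (simp add: u_def field_simps)
qed

lemma optimality_inequalities_imp_distance_bound:
  fixes x y gx gy g d :: "'a::real_inner"
  assumes mu: "\<mu> > 0" and eta: "\<eta> > 0" and eta_L: "\<eta> * L \<le> 1" and mu_eta: "\<mu> * \<eta> \<le> 1"
    and mono: "\<mu> * (norm (x - y))\<^sup>2 \<le> (gx - gy) \<bullet> (x - y)"
    and opt: "0 \<le> (gy - g - d) \<bullet> (x - y + \<eta> *\<^sub>R d)"
    and lip: "norm (gx - gy) \<le> L * norm (x - y)"
  shows "norm (x - y) \<le> 2 * (norm d + norm (gx - g)) / \<mu>"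
proof -
  define e A B where "e = x - y" and "A = gx - g" and "B = gy - gx"
  have sum: "\<mu> * (norm e)\<^sup>2 \<le> A \<bullet> e - d \<bullet> e + \<eta> * (A \<bullet> d) + \<eta> * (B \<bullet> d) - \<eta> * (d \<bullet> d)"
    using add_mono[OF mono opt] unfolding e_def A_def B_def
    by (simp add: inner_diff_left inner_diff_right inner_add_right algebra_simps)
  have "A \<bullet> e \<le> norm A * norm e" "- (d \<bullet> e) \<le> norm d * norm e"
    using norm_cauchy_schwarz[of A e] norm_cauchy_schwarz[of "- d" e] by simp_all
  moreover have "\<eta> * (A \<bullet> d) \<le> \<eta> * (norm A * norm d)"
    using norm_cauchy_schwarz[of A d] eta by simp
  moreover have "\<eta> * (B \<bullet> d) \<le> norm e * norm d"
  proof -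
    have "B \<bullet> d \<le> L * norm e * norm d"
      using norm_cauchy_schwarz[of B d] mult_right_mono[OF lip, of "norm d"]
      unfolding e_def B_def by (simp add: norm_minus_commute)
    then have "\<eta> * (B \<bullet> d) \<le> (\<eta> * L) * (norm e * norm d)"
      using eta by (simp add: mult_left_mono algebra_simps)
    also have "\<dots> \<le> norm e * norm d" using mult_right_mono[OF eta_L] by simp
    finally show ?thesis .
  qed
  moreover have "d \<bullet> d = (norm d)\<^sup>2" by (simp add: power2_norm_eq_inner)
  ultimately have "\<mu> * (norm e)\<^sup>2
      \<le> (norm A + 2 * norm d) * norm e + \<eta> * norm A * norm d - \<eta> * (norm d)\<^sup>2"
    using sum by (simp add: algebra_simps)
  from quadratic_inequality_imp_le[OF mu eta mu_eta _ _ this] show ?thesis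
    by (simp add: e_def A_def)
qed

lemma forward_backward_step_distance_bound:
  fixes F :: "'a::euclidean_space \<Rightarrow> real" and r :: "'a \<Rightarrow> ereal"
  assumes pcc: "proper_closed_convex r"
    and deriv: "\<And>y. (F has_derivative (\<lambda>h. G y \<bullet> h)) (at y)"
    and mono: "\<And>a b. \<mu> * (norm (a - b))\<^sup>2 \<le> (G a - G b) \<bullet> (a - b)"
    and lip: "\<And>a b. norm (G a - G b) \<le> L * norm (a - b)"
    and mu: "\<mu> > 0" and eta: "\<eta> > 0" and eta_L: "\<eta> * L \<le> 1"
    and min: "\<And>y. ereal (F xs) + r xs \<le> ereal (F y) + r y"
    and prox: "is_prox r \<eta> (x - \<eta> *\<^sub>R g) z"
  shows "norm (x - xs) \<le> 2 * (norm ((1 / \<eta>) *\<^sub>R (z - x)) + norm (G x - g)) / \<mu>"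
proof -
  have "\<mu> * \<eta> \<le> L * \<eta>"
    using strongly_monotone_Lipschitz_imp_le[OF mono lip] eta by simp
  then have mu_eta: "\<mu> * \<eta> \<le> 1" using eta_L by (simp add: mult.commute)
  obtain p where "r p \<noteq> \<infinity>" using pcc unfolding proper_closed_convex_def by blast
  have min1: "ereal (F xs) + ereal 1 * r xs \<le> ereal (F y) + ereal 1 * r y" for y
    using min by simp
  obtain rx where rx: "r xs = ereal rx"
    using proper_closed_convex_finite_at_minimizer[OF pcc _ \<open>r p \<noteq> \<infinity>\<close> min1[of p]] by auto
  obtain rz where rz: "r z = ereal rz"
    using proper_closed_convex_finite_at_minimizer[OF pcc eta \<open>r p \<noteq> \<infinity>\<close>] prox
    unfolding is_prox_def by blast
  define d where "d = (1 / \<eta>) *\<^sub>R (z - x)"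
  have z: "z = x + \<eta> *\<^sub>R d" using eta by (simp add: d_def)
  have "(x - \<eta> *\<^sub>R g - z) \<bullet> (xs - z) \<le> \<eta> * (rx - rz)"
    using is_prox_variational_inequality[OF pcc prox _ rz rx] eta by simp
  then have "\<eta> * ((g + d) \<bullet> (z - xs)) \<le> \<eta> * (rx - rz)"
    by (simp add: z inner_diff_left inner_diff_right inner_add_left algebra_simps)
  then have "(g + d) \<bullet> (z - xs) \<le> rx - rz" using eta by simp
  moreover have "0 \<le> G xs \<bullet> (z - xs) + 1 * (rz - rx)"
    using composite_minimizer_variational_inequality[OF pcc _ deriv min1 rx rz] by simp
  ultimately have "0 \<le> (G xs - g - d) \<bullet> (x - xs + \<eta> *\<^sub>R d)"
    by (simp add: z inner_diff_left inner_add_left algebra_simps)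
  from optimality_inequalities_imp_distance_bound[OF mu eta eta_L mu_eta mono[of x xs] this lip]
  show ?thesis by (simp add: d_def)
qed

lemma norm_diff_le_sum_increments:
  fixes x :: "nat \<Rightarrow> 'a::real_normed_vector"
  assumes "j \<le> k"
  shows "norm (x k - x j) \<le> (\<Sum>i\<in>{j..<k}. norm (x (Suc i) - x i))"
  using norm_sum[of "\<lambda>i. x (Suc i) - x i" "{j..<k}"] sum_Suc_diff'[OF assms, of x] by simp

lemma norm_average_diff_le:
  fixes gradf :: "nat \<Rightarrow> 'a::real_normed_vector \<Rightarrow> 'b::real_normed_vector"
  assumes lips: "\<And>i y z. i < m \<Longrightarrow> norm (gradf i y - gradf i z) \<le> Li i * norm (y - z)"
  shows "norm ((1 / real m) *\<^sub>R (\<Sum>i<m. gradf i (p i)) - (1 / real m) *\<^sub>R (\<Sum>i<m. gradf i (q i)))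
    \<le> (1 / real m) * (\<Sum>i<m. Li i * norm (p i - q i))"
proof -
  have "norm (\<Sum>i<m. gradf i (p i) - gradf i (q i)) \<le> (\<Sum>i<m. Li i * norm (p i - q i))"
    using norm_sum[of "\<lambda>i. gradf i (p i) - gradf i (q i)" "{..<m}"] lips
      sum_mono[of "{..<m}" "\<lambda>i. norm (gradf i (p i) - gradf i (q i))" "\<lambda>i. Li i * norm (p i - q i)"]
    by simp
  then show ?thesis
    by (simp add: sum_subtractf flip: scaleR_diff_right) (simp add: divide_right_mono)
qed

lemma delayed_average_gradient_error:
  fixes gradf :: "nat \<Rightarrow> 'a::real_normed_vector \<Rightarrow> 'b::real_normed_vector"
  assumes lips: "\<And>i y z. i < m \<Longrightarrow> norm (gradf i y - gradf i z) \<le> Li i * norm (y - z)"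
    and Li_nonneg: "\<And>i. i < m \<Longrightarrow> Li i \<ge> 0"
    and tau_lo: "\<And>i. i < m \<Longrightarrow> k - K \<le> \<tau> i"
    and tau_hi: "\<And>i. i < m \<Longrightarrow> \<tau> i \<le> k"
  shows "norm ((1 / real m) *\<^sub>R (\<Sum>i<m. gradf i (x k)) - (1 / real m) *\<^sub>R (\<Sum>i<m. gradf i (x (\<tau> i))))
    \<le> (1 / real m) * (\<Sum>i<m. Li i) * (\<Sum>j\<in>{k - K..<k}. norm (x (Suc j) - x j))"
proof -
  let ?S = "\<Sum>j\<in>{k - K..<k}. norm (x (Suc j) - x j)"
  have "norm (x k - x (\<tau> i)) \<le> ?S" if "i < m" for i
  proof -
    have "norm (x k - x (\<tau> i)) \<le> (\<Sum>j\<in>{\<tau> i..<k}. norm (x (Suc j) - x j))"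
      using tau_hi[OF that] by (rule norm_diff_le_sum_increments)
    also have "\<dots> \<le> ?S"
      using tau_lo[OF that] by (intro sum_mono2) auto
    finally show ?thesis .
  qed
  then have "(\<Sum>i<m. Li i * norm (x k - x (\<tau> i))) \<le> (\<Sum>i<m. Li i * ?S)"
    by (intro sum_mono mult_left_mono) (auto simp: Li_nonneg)
  then have "(1 / real m) * (\<Sum>i<m. Li i * norm (x k - x (\<tau> i)))
      \<le> (1 / real m) * (\<Sum>i<m. Li i) * ?S"
    by (simp add: sum_distrib_right divide_right_mono)
  with norm_average_diff_le[where p = "\<lambda>_. x k" and q = "\<lambda>i. x (\<tau> i)", OF lips]
  show ?thesis by (rule order_trans)
qed

theorem lemma2:
  fixes m K :: nat
    and f :: "nat \<Rightarrow> 'a::euclidean_space \<Rightarrow> real"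
    and gradf :: "nat \<Rightarrow> 'a \<Rightarrow> 'a"
    and Li :: "nat \<Rightarrow> real"
    and \<mu> \<eta> :: real
    and r :: "'a \<Rightarrow> ereal"
    and xs :: 'a
    and x :: "nat \<Rightarrow> 'a"
    and \<tau> :: "nat \<Rightarrow> nat \<Rightarrow> nat"
  assumes m_pos: "m \<ge> 1"
    and grad: "\<And>i y. i < m \<Longrightarrow> (f i has_derivative (\<lambda>h. gradf i y \<bullet> h)) (at y)"
    and Li_nonneg: "\<And>i. i < m \<Longrightarrow> Li i \<ge> 0"
    and lips: "\<And>i y z. i < m \<Longrightarrow> norm (gradf i y - gradf i z) \<le> Li i * norm (y - z)"
    and mu_pos: "\<mu> > 0"
    and strong: "convex_on UNIV (\<lambda>y. (1 / real m) * (\<Sum>i<m. f i y) - \<mu> / 2 * (norm y)\<^sup>2)"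
    and r_pcc: "proper_closed_convex r"
    and xs_min: "\<And>y. ereal ((1 / real m) * (\<Sum>i<m. f i xs)) + r xs
                      \<le> ereal ((1 / real m) * (\<Sum>i<m. f i y)) + r y"
    and eta_pos: "\<eta> > 0"
    and eta_le: "\<eta> * ((1 / real m) * (\<Sum>i<m. Li i)) \<le> 1"
    and tau_lo: "\<And>i k. i < m \<Longrightarrow> k - K \<le> \<tau> i k"
    and tau_hi: "\<And>i k. i < m \<Longrightarrow> \<tau> i k \<le> k"
    and step: "\<And>k. is_prox r \<eta>
                 (x k - \<eta> *\<^sub>R ((1 / real m) *\<^sub>R (\<Sum>i<m. gradf i (x (\<tau> i k))))) (x (Suc k))"
  shows "\<And>k. norm (x k - xs) \<le>
      2 / \<mu> * norm ((1 / \<eta>) *\<^sub>R (x (Suc k) - x k))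
      + 2 * \<eta> * (((1 / real m) * (\<Sum>i<m. Li i)) / \<mu>)
          * (\<Sum>j\<in>{k - K..<k}. norm ((1 / \<eta>) *\<^sub>R (x (Suc j) - x j)))"
proof -
  define F where "F y = (1 / real m) * (\<Sum>i<m. f i y)" for y
  define G where "G y = (1 / real m) *\<^sub>R (\<Sum>i<m. gradf i y)" for y
  define L where "L = (1 / real m) * (\<Sum>i<m. Li i)"
  have deriv: "(F has_derivative (\<lambda>h. G y \<bullet> h)) (at y)" for y
    unfolding F_def[abs_def] G_def
    using m_pos by (auto intro!: derivative_eq_intros grad simp: inner_sum_left)
  have lip: "norm (G a - G b) \<le> L * norm (a - b)" for a b
    using norm_average_diff_le[where p = "\<lambda>_. a" and q = "\<lambda>_. b", OF lips]
    by (simp add: G_def L_def sum_distrib_right)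
  have mono: "\<mu> * (norm (a - b))\<^sup>2 \<le> (G a - G b) \<bullet> (a - b)" for a b
    using strong unfolding F_def[symmetric] by (rule strongly_convex_imp_strongly_monotone_gradient[OF _ deriv])
  have min: "ereal (F xs) + r xs \<le> ereal (F y) + r y" for y
    using xs_min by (simp add: F_def)
  fix k
  let ?d = "\<lambda>j. (1 / \<eta>) *\<^sub>R (x (Suc j) - x j)"
  let ?S = "\<Sum>j\<in>{k - K..<k}. norm (x (Suc j) - x j)"
  let ?g = "(1 / real m) *\<^sub>R (\<Sum>i<m. gradf i (x (\<tau> i k)))"
  have sum_d: "(\<Sum>j\<in>{k - K..<k}. norm (?d j)) = ?S / \<eta>"
    using eta_pos by (simp add: sum_divide_distrib)
  have "norm (x k - xs) \<le> 2 * (norm (?d k) + norm (G (x k) - ?g)) / \<mu>"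
    using forward_backward_step_distance_bound[OF r_pcc deriv mono lip mu_pos eta_pos _ min step]
      eta_le by (simp add: L_def)
  also have "\<dots> \<le> 2 * (norm (?d k) + L * ?S) / \<mu>"
    using delayed_average_gradient_error[where \<tau> = "\<lambda>i. \<tau> i k", OF lips Li_nonneg tau_lo tau_hi]
      mu_pos by (intro divide_right_mono mult_left_mono add_left_mono) (auto simp: G_def L_def)
  also have "\<dots> = 2 / \<mu> * norm (?d k) + 2 * \<eta> * (L / \<mu>) * (\<Sum>j\<in>{k - K..<k}. norm (?d j))"
    unfolding sum_d using eta_pos mu_pos by (simp add: field_simps)
  finally show "norm (x k - xs) \<le> 2 / \<mu> * norm (?d k)
      + 2 * \<eta> * (((1 / real m) * (\<Sum>i<m. Li i)) / \<mu>) * (\<Sum>j\<in>{k - K..<k}. norm (?d j))"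
    unfolding L_def .
qed

end
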